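(* Fix an integer $\Delta\geq 3$. There is a function $\varepsilon:\mathbb{N}\to\mathbb{R}$, depending only on $n$ (for the fixed $\Delta$), with $\varepsilon(n)\to 0$ as $n\to\infty$, such that for every integer $n\geq 3$, every graph $G$ of order $n$ and maximum degree at most $\Delta$ satisfies $$Mo(G)\leq \frac{\Delta}{2}n^2-(2-\varepsilon(n))\frac{\Delta-2}{(\Delta-1)^2}\,n\log_{(\Delta-1)}\left(\log_{(\Delta-1)}(n)\right).$$
   Context: All graphs are finite and simple. For a graph $G$ and an edge $uv$ of $G$, $n_G(u,v)$ denotes the number of vertices of $G$ whose distance in $G$ to $u$ is smaller than their distance to $v$ (vertices in other components have infinite distance to both and are not counted). The Mostar index of $G$ is $Mo(G)=\sum_{uv\in E(G)}|n_G(u,v)-n_G(v,u)|$. The $o(1)$ term of the paper is written here as $\varepsilon(n)$. *)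

theory Defs
  imports Complex_Main "HOL-Library.Extended_Nat"
begin

definition simple_graph :: "'a set \<Rightarrow> ('a \<Rightarrow> 'a \<Rightarrow> bool) \<Rightarrow> bool" where
  "simple_graph V E \<longleftrightarrow> finite V \<and> (\<forall>u v. E u v \<longrightarrow> u \<in> V \<and> v \<in> V)
     \<and> (\<forall>u v. E u v \<longrightarrow> E v u) \<and> (\<forall>u. \<not> E u u)"

definition degree :: "'a set \<Rightarrow> ('a \<Rightarrow> 'a \<Rightarrow> bool) \<Rightarrow> 'a \<Rightarrow> nat" where
  "degree V E u = card {v \<in> V. E u v}"

definition gdist :: "('a \<Rightarrow> 'a \<Rightarrow> bool) \<Rightarrow> 'a \<Rightarrow> 'a \<Rightarrow> enat" where
  "gdist E u v = (INF k \<in> {k. (E ^^ k) u v}. enat k)"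

definition ncloser :: "'a set \<Rightarrow> ('a \<Rightarrow> 'a \<Rightarrow> bool) \<Rightarrow> 'a \<Rightarrow> 'a \<Rightarrow> nat" where
  "ncloser V E u v = card {w \<in> V. gdist E w u < gdist E w v}"

text \<open>Mostar index: sum over (unordered) edges uv of |n(u,v) - n(v,u)|; since the
summand is symmetric, this is half the sum over ordered adjacent pairs.\<close>
definition mostar :: "'a set \<Rightarrow> ('a \<Rightarrow> 'a \<Rightarrow> bool) \<Rightarrow> real" where
  "mostar V E = (\<Sum>u\<in>V. \<Sum>v\<in>V. if E u v then
       \<bar>real (ncloser V E u v) - real (ncloser V E v u)\<bar> else 0) / 2"

end

theory Submission
  imports Defs "HOL-Real_Asymp.Real_Asymp"
begin

text \<open>
  Give a vertex w the weight 2 for an oriented edge uv if w is strictly closer to the endpoint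
  with fewer closer vertices, 1 if w is equidistant from u and v, and 0 otherwise. The weights of
  uv add up to n - |n(u,v) - n(v,u)|, hence 2 Mo(G) = \<Delta> n^2 - \<Sum> L(w), where L(w) is the total
  weight of w plus n times the degree deficit \<Delta> - deg w. Every edge of a geodesic from w to r
  separates w from r, so L(w) + L(r) \<ge> 4 d(w,r), and a vertex unreachable from w contributes its
  degree to L(w). Consequently the vertices with L(w) < 4t lie in one ball of radius 2t or among
  fewer than 4t vertices unreachable from its centre, and \<Sum> L(w) \<ge> 4t (n - (\<Delta>+1)^(2t) - 4t).
  With t about log n / (4 log (\<Delta>+1)) this saves order n log n, which eventually beats the
  required n log log n, so \<epsilon> can be taken to vanish for large n.
\<close>

lemma simple_graphD:
  assumes "simple_graph V E"
  shows "finite V" "E u v \<Longrightarrow> u \<in> V" "E u v \<Longrightarrow> v \<in> V" "symp E" "\<not> E u u"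
  using assms unfolding simple_graph_def symp_def by blast+

lemma relpowp_symp:
  assumes "symp E" "(E ^^ k) x y"
  shows "(E ^^ k) y x"
  using assms(2)
proof (induction k arbitrary: y)
  case (Suc k)
  from Suc.prems obtain z where xz: "(E ^^ k) x z" and zy: "E z y" by (rule relpowp_Suc_E)
  have "E y z" using assms(1) zy by (rule sympD)
  then show ?case using Suc.IH[OF xz] by (rule relpowp_Suc_I2)
qed simp

lemma gdist_le_enat: "(E ^^ k) x y \<Longrightarrow> gdist E x y \<le> enat k"
  unfolding gdist_def by (rule INF_lower) simp

lemma gdist_eq_infinity_iff: "gdist E x y = \<infinity> \<longleftrightarrow> (\<forall>k. \<not> (E ^^ k) x y)"
proof
  assume "gdist E x y = \<infinity>"
  then show "\<forall>k. \<not> (E ^^ k) x y" using gdist_le_enat by fastforce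
qed (simp add: gdist_def top_enat_def)

lemma gdist_enatD:
  assumes "gdist E x y = enat k"
  shows "(E ^^ k) x y"
proof -
  have "{j. (E ^^ j) x y} \<noteq> {}" using assms gdist_eq_infinity_iff[of E x y] by auto
  then have "gdist E x y \<in> enat ` {j. (E ^^ j) x y}"
    unfolding gdist_def Inf_enat_def by (auto intro: LeastI)
  with assms show ?thesis by auto
qed

lemma gdist_le_enat_iff: "gdist E x y \<le> enat k \<longleftrightarrow> (\<exists>j\<le>k. (E ^^ j) x y)"
proof
  assume "gdist E x y \<le> enat k"
  then obtain j where "gdist E x y = enat j" "j \<le> k" by (cases "gdist E x y") auto
  then show "\<exists>j\<le>k. (E ^^ j) x y" by (blast dest: gdist_enatD)
qed (meson gdist_le_enat enat_ord_simps(1) order_trans)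

lemma gdist_sym:
  assumes "symp E"
  shows "gdist E x y = gdist E y x"
proof -
  have "{k. (E ^^ k) x y} = {k. (E ^^ k) y x}" using relpowp_symp[OF assms] by blast
  then show ?thesis by (simp add: gdist_def)
qed

lemma gdist_geodesic_prefix:
  assumes "gdist E x z = enat (i + j)" "(E ^^ i) x y" "(E ^^ j) y z"
  shows "gdist E x y = enat i"
proof -
  obtain i' where i': "gdist E x y = enat i'" "i' \<le> i"
    using gdist_le_enat[OF assms(2)] by (cases "gdist E x y") auto
  have "(E ^^ (i' + j)) x z" using gdist_enatD[OF i'(1)] assms(3) by (rule relpowp_trans)
  then have "i + j \<le> i' + j" using gdist_le_enat assms(1) by fastforce
  with i' show ?thesis by simp
qed

lemma geodesic_separating_edge:
  assumes "symp E" "gdist E w r = enat k" "i < k"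
  obtains x y where "E x y" "gdist E w x = enat i"
    "gdist E w x < gdist E w y" "gdist E r y < gdist E r x"
proof -
  obtain m where k: "k = i + Suc m" using assms(3) by (metis add_Suc_right less_imp_Suc_add)
  have "(E ^^ i OO E ^^ Suc m) w r" using gdist_enatD[OF assms(2)] k by (simp only: relpowp_add)
  then obtain x where wx: "(E ^^ i) w x" and xr: "(E ^^ Suc m) x r" by blast
  then obtain y where xy: "E x y" and yr: "(E ^^ m) y r" by (blast dest: relpowp_Suc_D2)
  have wy: "(E ^^ Suc i) w y" using wx xy by (rule relpowp_Suc_I)
  have wr: "gdist E w r = enat (i + Suc m)" "gdist E w r = enat (Suc i + m)"
    using assms(2) k by simp_all
  have rw: "gdist E r w = enat (m + Suc i)" "gdist E r w = enat (Suc m + i)"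
    using wr gdist_sym[OF assms(1)] by (simp_all add: add.commute)
  have wx_dist: "gdist E w x = enat i" using wr(1) wx xr by (rule gdist_geodesic_prefix)
  have wy_dist: "gdist E w y = enat (Suc i)" using wr(2) wy yr by (rule gdist_geodesic_prefix)
  have ry_dist: "gdist E r y = enat m"
    using rw(1) relpowp_symp[OF assms(1) yr] relpowp_symp[OF assms(1) wy]
    by (rule gdist_geodesic_prefix)
  have rx_dist: "gdist E r x = enat (Suc m)"
    using rw(2) relpowp_symp[OF assms(1) xr] relpowp_symp[OF assms(1) wx]
    by (rule gdist_geodesic_prefix)
  show ?thesis
    by (rule that[OF xy wx_dist]) (simp_all only: wx_dist wy_dist ry_dist rx_dist enat_ord_simps lessI)
qed

definition mostar_weight :: "'a set \<Rightarrow> ('a \<Rightarrow> 'a \<Rightarrow> bool) \<Rightarrow> 'a \<Rightarrow> 'a \<Rightarrow> 'a \<Rightarrow> real" where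
  "mostar_weight V E u v w =
     (if ncloser V E u v < ncloser V E v u then 2 * of_bool (gdist E w u < gdist E w v)
      else 2 * of_bool (gdist E w v < gdist E w u))
     + of_bool (gdist E w u = gdist E w v)"

definition mostar_loss :: "'a set \<Rightarrow> ('a \<Rightarrow> 'a \<Rightarrow> bool) \<Rightarrow> 'a \<Rightarrow> real" where
  "mostar_loss V E w = (\<Sum>u\<in>V. \<Sum>v\<in>V. if E u v then mostar_weight V E u v w else 0)"

lemma mostar_weight_nonneg: "0 \<le> mostar_weight V E u v w"
  by (simp add: mostar_weight_def)

lemma mostar_loss_nonneg: "0 \<le> mostar_loss V E w"
  unfolding mostar_loss_def by (intro sum_nonneg) (simp add: mostar_weight_nonneg)

lemma sum_mostar_weight:
  assumes "finite V"
  shows "(\<Sum>w\<in>V. mostar_weight V E u v w)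
    = real (card V) - \<bar>real (ncloser V E u v) - real (ncloser V E v u)\<bar>"
proof -
  have closer: "(\<Sum>w\<in>V. of_bool (gdist E w x < gdist E w y)) = real (ncloser V E x y)" for x y
    using assms by (simp add: ncloser_def Int_def)
  have "of_bool (gdist E w u = gdist E w v)
      = 1 - of_bool (gdist E w u < gdist E w v) - (of_bool (gdist E w v < gdist E w u) :: real)" for w
    by (cases "gdist E w u" "gdist E w v" rule: linorder_cases) auto
  then show ?thesis
    by (cases "ncloser V E u v < ncloser V E v u")
      (simp_all add: mostar_weight_def sum.distrib sum_subtractf closer flip: sum_distrib_left)
qed

lemma sum_neighbours_const:
  assumes "finite V"
  shows "(\<Sum>v\<in>V. if E u v then c else 0) = real (degree V E u) * c"
  using assms by (simp add: degree_def flip: sum.inter_filter)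

lemma two_mostar_eq:
  assumes "finite V"
  shows "2 * mostar V E
    = (\<Sum>u\<in>V. real (degree V E u)) * real (card V) - (\<Sum>w\<in>V. mostar_loss V E w)"
proof -
  have "2 * mostar V E = (\<Sum>u\<in>V. \<Sum>v\<in>V.
      (if E u v then real (card V) else 0) - (\<Sum>w\<in>V. if E u v then mostar_weight V E u v w else 0))"
    unfolding mostar_def by (auto intro!: sum.cong simp: sum_mostar_weight[OF assms])
  also have "\<dots> = (\<Sum>u\<in>V. real (degree V E u) * real (card V))
      - (\<Sum>u\<in>V. \<Sum>v\<in>V. \<Sum>w\<in>V. if E u v then mostar_weight V E u v w else 0)"
    by (simp add: sum_subtractf sum_neighbours_const[OF assms])
  also have "(\<Sum>u\<in>V. \<Sum>v\<in>V. \<Sum>w\<in>V. if E u v then mostar_weight V E u v w else 0)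
      = (\<Sum>u\<in>V. \<Sum>w\<in>V. \<Sum>v\<in>V. if E u v then mostar_weight V E u v w else 0)"
    by (intro sum.cong refl sum.swap)
  also have "\<dots> = (\<Sum>w\<in>V. mostar_loss V E w)"
    unfolding mostar_loss_def by (rule sum.swap)
  finally show ?thesis by (simp add: sum_distrib_right)
qed

lemma mostar_weight_separated:
  assumes "gdist E w u < gdist E w v" "gdist E r v < gdist E r u"
  shows "2 \<le> mostar_weight V E u v w + mostar_weight V E u v r"
  using assms unfolding mostar_weight_def by auto

lemma mostar_loss_add_ge_gdist:
  assumes G: "simple_graph V E" and wr: "gdist E w r = enat k"
  shows "4 * real k \<le> mostar_loss V E w + mostar_loss V E r"
proof -
  note graph = simple_graphD[OF G]
  define h where "h p = (if E (fst p) (snd p)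
      then mostar_weight V E (fst p) (snd p) w + mostar_weight V E (fst p) (snd p) r else 0)"
    for p
  define level where "level i = {p \<in> V \<times> V. E (fst p) (snd p)
      \<and> min (gdist E w (fst p)) (gdist E w (snd p)) = enat i}" for i
  have h_nonneg: "0 \<le> h p" for p
    by (simp add: h_def mostar_weight_nonneg)
  have level_finite: "finite (level i)" for i
    using graph(1) by (simp add: level_def)
  have level_sum: "4 \<le> sum h (level i)" if ik: "i < k" for i
  proof -
    obtain x y where xy: "E x y" "gdist E w x = enat i"
        "gdist E w x < gdist E w y" "gdist E r y < gdist E r x"
      using geodesic_separating_edge[OF graph(4) wr ik] by blast
    have yx: "E y x" using graph(4) xy(1) by (rule sympD)
    have "x \<noteq> y" using xy(1) graph(5) by blast
    have "4 \<le> h (x, y) + h (y, x)"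
      using mostar_weight_separated[of E w x y r V] mostar_weight_separated[of E r y x w V]
        xy yx by (simp add: h_def)
    also have "\<dots> = sum h {(x, y), (y, x)}" using \<open>x \<noteq> y\<close> by simp
    also have "\<dots> \<le> sum h (level i)"
    proof (rule sum_mono2[OF level_finite _ h_nonneg])
      show "{(x, y), (y, x)} \<subseteq> level i"
        using xy yx graph(2,3) by (auto simp: level_def min_def)
    qed
    finally show ?thesis .
  qed
  have "4 * real k = (\<Sum>i<k. 4)" by simp
  also have "\<dots> \<le> (\<Sum>i<k. sum h (level i))" by (intro sum_mono level_sum) simp
  also have "\<dots> = sum h (\<Union>i<k. level i)"
    by (rule sum.UNION_disjoint[symmetric]) (use level_finite in \<open>auto simp: level_def\<close>)
  also have "\<dots> \<le> sum h (V \<times> V)"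
    using graph(1) by (intro sum_mono2 h_nonneg) (auto simp: level_def)
  also have "\<dots> = (\<Sum>u\<in>V. \<Sum>v\<in>V. h (u, v))" by (rule sum.cartesian_product')
  also have "\<dots> = mostar_loss V E w + mostar_loss V E r"
    unfolding mostar_loss_def h_def by (auto simp flip: sum.distrib intro!: sum.cong)
  finally show ?thesis .
qed

lemma gdist_infinity_adjacent:
  assumes "symp E" "E u v" "gdist E w u = \<infinity>"
  shows "gdist E w v = \<infinity>"
proof (rule ccontr)
  assume "gdist E w v \<noteq> \<infinity>"
  then obtain j where "(E ^^ j) w v" by (auto simp: gdist_eq_infinity_iff)
  moreover have "E v u" using assms(1,2) by (rule sympD)
  ultimately have "(E ^^ Suc j) w u" by (rule relpowp_Suc_I)
  with assms(3) show False unfolding gdist_eq_infinity_iff by blast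
qed

lemma sum_degree_unreachable_le_mostar_loss:
  assumes G: "simple_graph V E"
  shows "(\<Sum>u\<in>{u\<in>V. gdist E w u = \<infinity>}. real (degree V E u)) \<le> mostar_loss V E w"
proof -
  note graph = simple_graphD[OF G]
  have "real (degree V E u) \<le> (\<Sum>v\<in>V. if E u v then mostar_weight V E u v w else 0)"
    if u: "gdist E w u = \<infinity>" for u
  proof -
    have "1 \<le> mostar_weight V E u v w" if "E u v" for v
      using gdist_infinity_adjacent[OF graph(4) that u] u by (simp add: mostar_weight_def)
    then have "(\<Sum>v\<in>V. if E u v then 1 else 0) \<le> (\<Sum>v\<in>V. if E u v then mostar_weight V E u v w else 0)"
      by (intro sum_mono) simp
    then show ?thesis by (simp add: sum_neighbours_const[OF graph(1)])
  qed
  then have "(\<Sum>u\<in>{u\<in>V. gdist E w u = \<infinity>}. real (degree V E u))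
      \<le> (\<Sum>u\<in>{u\<in>V. gdist E w u = \<infinity>}. \<Sum>v\<in>V. if E u v then mostar_weight V E u v w else 0)"
    by (intro sum_mono) simp
  also have "\<dots> \<le> mostar_loss V E w"
    unfolding mostar_loss_def using graph(1)
    by (intro sum_mono2 sum_nonneg) (auto simp: mostar_weight_nonneg)
  finally show ?thesis .
qed

lemma card_ball_le:
  assumes G: "simple_graph V E" and deg: "\<forall>u\<in>V. degree V E u \<le> D"
  shows "card {x\<in>V. gdist E w x \<le> enat k} \<le> (D + 1) ^ k"
proof (induction k)
  case 0
  have "{x\<in>V. gdist E w x \<le> enat 0} \<subseteq> {w}" by (auto simp: gdist_le_enat_iff)
  then have "card {x\<in>V. gdist E w x \<le> enat 0} \<le> card {w}" by (intro card_mono) simp_all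
  then show ?case by simp
next
  case (Suc k)
  note graph = simple_graphD[OF G]
  define B where "B = {x\<in>V. gdist E w x \<le> enat k}"
  have "{x\<in>V. gdist E w x \<le> enat (Suc k)} \<subseteq> B \<union> (\<Union>y\<in>B. {v\<in>V. E y v})"
  proof
    fix x assume "x \<in> {x\<in>V. gdist E w x \<le> enat (Suc k)}"
    then obtain j where x: "x \<in> V" "j \<le> Suc k" "(E ^^ j) w x" by (auto simp: gdist_le_enat_iff)
    show "x \<in> B \<union> (\<Union>y\<in>B. {v\<in>V. E y v})"
    proof (cases "j \<le> k")
      case True
      then show ?thesis using x by (auto simp: B_def gdist_le_enat_iff)
    next
      case False
      with x have "(E ^^ Suc k) w x" by (simp add: le_Suc_eq)
      then obtain y where "(E ^^ k) w y" "E y x" by (rule relpowp_Suc_E)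
      then have "y \<in> B" using graph(2) by (auto simp: B_def gdist_le_enat)
      then show ?thesis using x \<open>E y x\<close> by blast
    qed
  qed
  then have "card {x\<in>V. gdist E w x \<le> enat (Suc k)} \<le> card (B \<union> (\<Union>y\<in>B. {v\<in>V. E y v}))"
    using graph(1) by (intro card_mono) (auto simp: B_def)
  also have "\<dots> \<le> card B + card (\<Union>y\<in>B. {v\<in>V. E y v})" by (rule card_Un_le)
  also have "card (\<Union>y\<in>B. {v\<in>V. E y v}) \<le> (\<Sum>y\<in>B. card {v\<in>V. E y v})"
    using graph(1) by (intro card_UN_le) (simp add: B_def)
  also have "\<dots> \<le> (\<Sum>y\<in>B. D)"
    using deg by (intro sum_mono) (auto simp: B_def degree_def)
  also have "card B + (\<Sum>y\<in>B. D) = card B * (D + 1)" by (simp add: algebra_simps)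
  also have "\<dots> \<le> (D + 1) ^ k * (D + 1)" using Suc.IH unfolding B_def by (rule mult_le_mono1)
  finally show ?case by (simp add: mult.commute)
qed

definition padded_loss :: "nat \<Rightarrow> 'a set \<Rightarrow> ('a \<Rightarrow> 'a \<Rightarrow> bool) \<Rightarrow> 'a \<Rightarrow> real" where
  "padded_loss D V E w = mostar_loss V E w + (real D - real (degree V E w)) * real (card V)"

lemma mostar_loss_le_padded_loss:
  "degree V E w \<le> D \<Longrightarrow> mostar_loss V E w \<le> padded_loss D V E w"
  by (simp add: padded_loss_def)

lemma two_mostar_eq_padded:
  assumes "finite V"
  shows "2 * mostar V E = real D * real (card V) ^ 2 - (\<Sum>w\<in>V. padded_loss D V E w)"
  using two_mostar_eq[OF assms, of E] unfolding padded_loss_def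
  by (simp add: sum.distrib sum_subtractf power2_eq_square flip: sum_distrib_right)
    (simp add: algebra_simps)

lemma card_low_padded_loss_le:
  assumes G: "simple_graph V E" and deg: "\<forall>u\<in>V. degree V E u \<le> D" and D: "1 \<le> D"
  shows "card {w\<in>V. padded_loss D V E w < 4 * real t} \<le> (D + 1) ^ (2 * t) + 4 * t"
proof -
  note graph = simple_graphD[OF G]
  define S where "S = {w\<in>V. padded_loss D V E w < 4 * real t}"
  have S_loss: "mostar_loss V E w < 4 * real t" if "w \<in> S" for w
    using that deg mostar_loss_le_padded_loss[of V E w D] by (auto simp: S_def)
  have "card S \<le> card V" using graph(1) by (intro card_mono) (auto simp: S_def)
  consider "S = {}" | "card V < 4 * t" | w0 where "w0 \<in> S" "4 * t \<le> card V"
    by (meson all_not_in_conv not_less)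
  then have "card S \<le> (D + 1) ^ (2 * t) + 4 * t"
  proof cases
    case 3
    define U where "U = {r\<in>S. gdist E w0 r = \<infinity>}"
    have "S \<subseteq> {x\<in>V. gdist E w0 x \<le> enat (2 * t)} \<union> U"
    proof
      fix r assume r: "r \<in> S"
      show "r \<in> {x\<in>V. gdist E w0 x \<le> enat (2 * t)} \<union> U"
      proof (cases "gdist E w0 r")
        case (enat k)
        have "4 * real k < 4 * real (2 * t)"
          using mostar_loss_add_ge_gdist[OF G enat] S_loss[OF r] S_loss[OF 3(1)] by simp
        then show ?thesis using r enat by (simp add: S_def)
      next
        case infinity
        then show ?thesis using r by (simp add: U_def)
      qed
    qed
    then have "card S \<le> card ({x\<in>V. gdist E w0 x \<le> enat (2 * t)} \<union> U)"
      using graph(1) by (intro card_mono) (auto simp: U_def S_def)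
    also have "\<dots> \<le> card {x\<in>V. gdist E w0 x \<le> enat (2 * t)} + card U" by (rule card_Un_le)
    also have "\<dots> \<le> (D + 1) ^ (2 * t) + card U" using card_ball_le[OF G deg] by simp
    also have "card U \<le> 4 * t"
    proof -
      have "1 \<le> degree V E r" if "r \<in> U" for r
      proof -
        have "(real D - real (degree V E r)) * real (card V) < 1 * real (card V)"
          using that 3(2) mostar_loss_nonneg[of V E r]
          by (simp add: U_def S_def padded_loss_def)
        then have "real D - real (degree V E r) < 1" by (rule mult_right_less_imp_less) simp
        then have "real D < real (degree V E r + 1)" by simp
        then show ?thesis using D by linarith
      qed
      then have "real (card U) \<le> (\<Sum>r\<in>U. real (degree V E r))"
        using sum_mono[of U "\<lambda>_. 1::real"] by force
      also have "\<dots> \<le> (\<Sum>u\<in>{u\<in>V. gdist E w0 u = \<infinity>}. real (degree V E u))"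
        using graph(1) by (intro sum_mono2) (auto simp: U_def S_def)
      also have "\<dots> \<le> mostar_loss V E w0" by (rule sum_degree_unreachable_le_mostar_loss[OF G])
      also have "\<dots> < 4 * real t" using S_loss[OF 3(1)] .
      finally show ?thesis by simp
    qed
    finally show ?thesis by simp
  qed (use \<open>card S \<le> card V\<close> in auto)
  then show ?thesis by (simp add: S_def)
qed

lemma mostar_le_gap:
  assumes G: "simple_graph V E" and deg: "\<forall>u\<in>V. degree V E u \<le> D" and "1 \<le> D"
  shows "mostar V E \<le> real D / 2 * real (card V) ^ 2
    - 2 * real t * (real (card V) - real ((D + 1) ^ (2 * t)) - 4 * real t)"
proof -
  note graph = simple_graphD[OF G]
  define S where "S = {w\<in>V. padded_loss D V E w < 4 * real t}"
  have "S \<subseteq> V" by (auto simp: S_def)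
  have padded_nonneg: "0 \<le> padded_loss D V E w" if "w \<in> V" for w
    using that deg mostar_loss_nonneg[of V E w] mostar_loss_le_padded_loss[of V E w D] by force
  have "4 * real t * (real (card V) - real (card S)) = (\<Sum>w\<in>V - S. 4 * real t)"
    using graph(1) \<open>S \<subseteq> V\<close> by (simp add: card_Diff_subset card_mono finite_subset of_nat_diff)
  also have "\<dots> \<le> (\<Sum>w\<in>V - S. padded_loss D V E w)" by (intro sum_mono) (auto simp: S_def)
  also have "\<dots> \<le> (\<Sum>w\<in>V. padded_loss D V E w)"
    using graph(1) padded_nonneg by (intro sum_mono2) auto
  finally have sum_ge: "4 * real t * (real (card V) - real (card S)) \<le> (\<Sum>w\<in>V. padded_loss D V E w)" .
  have "real (card S) \<le> real ((D + 1) ^ (2 * t)) + 4 * real t"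
    using card_low_padded_loss_le[OF assms, of t] unfolding S_def by linarith
  then have "4 * real t * (real (card V) - real ((D + 1) ^ (2 * t)) - 4 * real t)
      \<le> 4 * real t * (real (card V) - real (card S))"
    by (intro mult_left_mono) auto
  then show ?thesis using two_mostar_eq_padded[OF graph(1), of E D] sum_ge by linarith
qed

lemma gap_at_logarithmic_scale:
  fixes x :: real
  assumes D: "2 \<le> D" and x: "1 \<le> x" "ln x \<le> x - sqrt x"
  defines "t \<equiv> nat \<lfloor>ln x / (4 * ln (real D + 1))\<rfloor>"
  shows "2 * (ln x / (4 * ln (real D + 1)) - 1) * (x - sqrt x - ln x)
    \<le> 2 * real t * (x - real ((D + 1) ^ (2 * t)) - 4 * real t)"
proof -
  define A where "A = ln (real D + 1)"
  have "ln (exp 1) \<le> A"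
    unfolding A_def using exp_le D by (subst ln_le_cancel_iff) auto
  then have A: "1 \<le> A" by simp
  have "0 \<le> ln x / (4 * A)" using x A by simp
  then have t_floor: "real t = of_int \<lfloor>ln x / (4 * A)\<rfloor>" by (simp add: t_def A_def)
  have t_lower: "ln x / (4 * A) - 1 \<le> real t"
    using t_floor real_of_int_floor_add_one_gt[of "ln x / (4 * A)"] by linarith
  have "real t \<le> ln x / (4 * A)" using t_floor by simp
  then have "4 * real t * A \<le> ln x" using A by (simp add: pos_le_divide_eq mult_ac)
  moreover have "4 * real t * 1 \<le> 4 * real t * A" using A by (intro mult_left_mono) simp_all
  ultimately have four_t: "4 * real t \<le> ln x" by linarith
  have "ln (real (D + 1) ^ (4 * t)) \<le> ln x"
    using \<open>4 * real t * A \<le> ln x\<close> by (simp add: ln_realpow A_def add.commute)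
  then have "real (D + 1) ^ (4 * t) \<le> x" using x by simp
  then have "real ((D + 1) ^ (2 * t)) ^ 2 \<le> x" by (simp flip: power_mult)
  then have "real ((D + 1) ^ (2 * t)) \<le> sqrt x" by (rule real_le_rsqrt)
  then have gap_le: "x - sqrt x - ln x \<le> x - real ((D + 1) ^ (2 * t)) - 4 * real t"
    using four_t by linarith
  have gap_nonneg: "0 \<le> x - sqrt x - ln x" using x by linarith
  have "2 * (ln x / (4 * A) - 1) * (x - sqrt x - ln x) \<le> 2 * real t * (x - sqrt x - ln x)"
    using t_lower gap_nonneg by (intro mult_right_mono) simp_all
  also have "\<dots> \<le> 2 * real t * (x - real ((D + 1) ^ (2 * t)) - 4 * real t)"
    using gap_le by (intro mult_left_mono) simp_all
  finally show ?thesis unfolding A_def .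
qed

lemma mostar_le_log_gap:
  assumes G: "simple_graph V E" and deg: "\<forall>u\<in>V. degree V E u \<le> D" and D: "2 \<le> D"
    and n: "1 \<le> card V" "ln (card V) \<le> card V - sqrt (card V)"
  shows "mostar V E \<le> real D / 2 * real (card V) ^ 2
    - 2 * (ln (card V) / (4 * ln (real D + 1)) - 1) * (card V - sqrt (card V) - ln (card V))"
  using mostar_le_gap[OF G deg, of "nat \<lfloor>ln (card V) / (4 * ln (real D + 1))\<rfloor>"]
    gap_at_logarithmic_scale[OF D, of "card V"] D n
  by simp

theorem theorem2:
  fixes \<Delta> :: nat
  assumes "\<Delta> \<ge> 3"
  shows "\<exists>\<epsilon> :: nat \<Rightarrow> real. \<epsilon> \<longlonglongrightarrow> 0 \<and>
    (\<forall>(n::nat) (V::nat set) E. n \<ge> 3 \<longrightarrow> simple_graph V E \<longrightarrow> card V = n \<longrightarrow>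
       (\<forall>u\<in>V. degree V E u \<le> \<Delta>) \<longrightarrow>
       mostar V E \<le> real \<Delta> / 2 * real n ^ 2
         - (2 - \<epsilon> n) * (real \<Delta> - 2) / (real \<Delta> - 1) ^ 2 * real n
           * log (real \<Delta> - 1) (log (real \<Delta> - 1) (real n)))"
proof -
  define gap where "gap n = 2 * (ln n / (4 * ln (real \<Delta> + 1)) - 1) * (n - sqrt n - ln n)"
    for n :: nat
  define good where "good n \<longleftrightarrow> 1 \<le> n \<and> ln n \<le> n - sqrt n \<and>
    2 * (real \<Delta> - 2) / (real \<Delta> - 1) ^ 2 * n * log (real \<Delta> - 1) (log (real \<Delta> - 1) n) \<le> gap n"
    for n :: nat
  define \<epsilon> where "\<epsilon> n = (if good n then 0 else 2 :: real)" for n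
  have "0 < ln (real \<Delta> + 1)" "1 < real \<Delta> - 1" using assms by simp_all
  then have "eventually good sequentially"
    unfolding good_def gap_def by (intro eventually_conj) real_asymp+
  then have "\<epsilon> \<longlonglongrightarrow> 0"
    by (intro tendsto_eventually) (simp add: eventually_mono \<epsilon>_def)
  moreover have "mostar V E \<le> real \<Delta> / 2 * real n ^ 2
         - (2 - \<epsilon> n) * (real \<Delta> - 2) / (real \<Delta> - 1) ^ 2 * real n
           * log (real \<Delta> - 1) (log (real \<Delta> - 1) (real n))"
    if G: "simple_graph V E" and n: "card V = n" and deg: "\<forall>u\<in>V. degree V E u \<le> \<Delta>"
    for n and V :: "nat set" and E
  proof (cases "good n")
    case True
    then show ?thesis
      using mostar_le_log_gap[OF G deg] n assms by (simp add: \<epsilon>_def good_def gap_def)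
  next
    case False
    then show ?thesis using mostar_le_gap[OF G deg, of 0] n assms by (simp add: \<epsilon>_def)
  qed
  ultimately show ?thesis by blast
qed

end
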